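(* Let $P=\{p_1,\dots,p_k\}$ be an ordered family of real polynomials. Then there exists a polynomial $p\in P$ such that, for all except at most one value of $h\in\mathbb{Z}$, the family $(p,h)^*P$ has type strictly smaller than the type of $P$, and the polynomial $p_1(t+h)-p(t)$ is its leading polynomial (i.e. belongs to $(p,h)^*P$ and has maximal degree in it).
   Context: A family $\{p_1,\dots,p_k\}$ of real polynomials is ordered if $\deg p_1\ge\deg p_2\ge\dots\ge\deg p_k$; then $p_1$ is its leading polynomial. The van der Corput operation: for a polynomial $p$ and $h\in\mathbb{Z}$, $(p,h)^*P$ is the family $\{p_1(t+h)-p(t),\dots,p_k(t+h)-p(t),\,p_1(t)-p(t),\dots,p_k(t)-p(t)\}$ with the polynomials of degree $0$ removed. The type of a family is $(d,w_d,\dots,w_1)$, where $d$ is the largest degree of its members and $w_i$ is the number of distinct leading coefficients among members of degree exactly $i$. Types are ordered first by $d$ and then, for equal $d$, lexicographically in $(w_d,\dots,w_1)$. *)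

theory Defs
  imports "HOL-Computational_Algebra.Polynomial"
begin

definition shift_poly :: "real poly \<Rightarrow> int \<Rightarrow> real poly" where
  "shift_poly q h = pcompose q [:of_int h, 1:]"

definition ordered_family :: "real poly list \<Rightarrow> bool" where
  "ordered_family ps \<longleftrightarrow> sorted_wrt (\<lambda>p q. degree p \<ge> degree q) ps"

definition vdc :: "real poly \<Rightarrow> int \<Rightarrow> real poly set \<Rightarrow> real poly set" where
  "vdc p h P = {r. (r \<in> (\<lambda>q. shift_poly q h - p) ` P \<or> r \<in> (\<lambda>q. q - p) ` P) \<and> degree r \<noteq> 0}"

text \<open>Type (d, w_d, ..., w_1), represented as the pair (d, [w_d, ..., w_1]).\<close>
definition max_deg :: "real poly set \<Rightarrow> nat" where
  "max_deg F = Max (insert 0 (degree ` F))"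

definition family_type :: "real poly set \<Rightarrow> nat \<times> nat list" where
  "family_type F = (max_deg F,
     map (\<lambda>i. card (lead_coeff ` {q \<in> F. degree q = i})) (rev [1..<max_deg F + 1]))"

definition type_less :: "nat \<times> nat list \<Rightarrow> nat \<times> nat list \<Rightarrow> bool" where
  "type_less a b \<longleftrightarrow> fst a < fst b \<or>
     (fst a = fst b \<and> (snd a, snd b) \<in> lexord {(x, y). x < y})"

end

theory Submission
  imports Defs
begin

(* Shifting the argument and subtracting a polynomial of smaller or equal degree do not disturb
   leading terms above deg p. So if p is a member of least degree m, the family (p,h)^*P has the
   same leading coefficients as P in every degree above m, while in degree m the leading
   coefficient of p itself disappears (the others are translated by -lc p): w_m drops by one.
   This works for every h as long as p_1(t+h) - p keeps the top degree d, i.e. unless all members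
   share degree d and the leading coefficient of p_1. In that case d >= 2 because the type is not
   (1,1); take p = p_1: every member of (p_1,h)^*P has degree < d, and for h nonzero
   p_1(t+h) - p_1 has degree exactly d - 1 (its coefficient of t^(d-1) is d h lc p_1), so d itself
   drops. *)

lemma degree_shift_poly [simp]: "degree (shift_poly q h) = degree q"
  by (simp add: shift_poly_def degree_pcompose)

(* Stated with degree q rather than degree (shift_poly q h), which simp rewrites first. *)
lemma lead_coeff_shift_poly [simp]: "coeff (shift_poly q h) (degree q) = lead_coeff q"
  using lead_coeff_comp[of "[:of_int h, 1:]" q] by (simp add: shift_poly_def degree_pcompose)

lemma coeff_pcompose_translate_pred_degree:
  fixes p :: "'a::idom poly"
  shows "coeff (pcompose p [:a, 1:]) (degree p - 1) =
    coeff p (degree p - 1) + of_nat (degree p) * a * lead_coeff p"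
proof (induction p)
  case (pCons b p)
  show ?case
  proof (cases "degree p")
    case 0
    then obtain c where "p = [:c:]" by (meson degree_eq_zeroE)
    then show ?thesis by (simp add: pcompose_pCons)
  next
    case (Suc n)
    then have "p \<noteq> 0" by auto
    have "coeff (pcompose p [:a, 1:]) (Suc n) = lead_coeff p"
      using lead_coeff_comp[of "[:a, 1:]" p] degree_pcompose[of p "[:a, 1:]"] Suc by simp
    then show ?thesis
      using pCons.IH Suc \<open>p \<noteq> 0\<close> by (simp add: pcompose_pCons algebra_simps)
  qed
qed simp

lemma degree_diff_eq_left:
  fixes p q :: "'a::ab_group_add poly"
  assumes "degree q \<le> degree p" and "degree q < degree p \<or> lead_coeff q \<noteq> lead_coeff p"
  shows "degree (p - q) = degree p"
proof (rule antisym)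
  show "degree (p - q) \<le> degree p"
    using assms(1) by (simp add: degree_diff_le)
  have "coeff q (degree p) \<noteq> lead_coeff p"
    using assms by (auto simp: coeff_eq_0 le_less)
  then show "degree p \<le> degree (p - q)"
    by (simp add: le_degree)
qed

lemma degree_diff_less_of_lead_coeff_eq:
  fixes p q :: "'a::ab_group_add poly"
  assumes "degree p = degree q" and "lead_coeff p = lead_coeff q" and "0 < degree p"
  shows "degree (p - q) < degree p"
proof (rule degree_lessI)
  show "\<forall>k\<ge>degree p. coeff (p - q) k = 0"
    using assms by (auto simp: coeff_eq_0 le_less)
qed (use assms in simp)

lemma degree_shift_poly_diff_self:
  assumes "h \<noteq> 0"
  shows "degree (shift_poly p h - p) = degree p - 1"
proof (cases "degree p = 0")
  case True
  then show ?thesis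
    using degree_diff_le[of "shift_poly p h" 0 p] by simp
next
  case False
  have "coeff (shift_poly p h - p) (degree p - 1) = of_nat (degree p) * of_int h * lead_coeff p"
    using coeff_pcompose_translate_pred_degree[of p "of_int h"] by (simp add: shift_poly_def)
  also have "\<dots> \<noteq> 0"
    using False assms by auto
  finally have "degree p - 1 \<le> degree (shift_poly p h - p)"
    by (rule le_degree)
  moreover have "degree (shift_poly p h - p) < degree p"
    using degree_diff_less_of_lead_coeff_eq[of "shift_poly p h" p] False by simp
  ultimately show ?thesis by simp
qed

definition lead_coeffs :: "'a::zero poly set \<Rightarrow> nat \<Rightarrow> 'a set" where
  "lead_coeffs F i = lead_coeff ` {q \<in> F. degree q = i}"

lemma family_type_lead_coeffs:
  "family_type F = (max_deg F, map (\<lambda>i. card (lead_coeffs F i)) (rev [1..<max_deg F + 1]))"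
  by (simp add: family_type_def lead_coeffs_def)

lemma degree_diff_eq_iff:
  fixes s q :: "'a::ab_group_add poly"
  assumes "degree q \<le> degree s" and "0 < degree q" and "degree q \<le> i"
  shows "degree (s - q) = i \<longleftrightarrow> degree s = i \<and> (i = degree q \<longrightarrow> lead_coeff s \<noteq> lead_coeff q)"
proof (cases "degree q < degree s \<or> lead_coeff q \<noteq> lead_coeff s")
  case True
  have "degree (s - q) = degree s"
    using assms(1) True by (rule degree_diff_eq_left)
  then show ?thesis
    using True by auto
next
  case False
  then have "degree (s - q) < degree s"
    using assms by (intro degree_diff_less_of_lead_coeff_eq) auto
  then show ?thesis
    using False assms by auto
qed

lemma lead_coeffs_diff_above:
  fixes S :: "'a::ab_group_add poly set"
  assumes "\<forall>s\<in>S. degree q \<le> degree s" and "0 < degree q" and "degree q < i"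
  shows "lead_coeffs ((\<lambda>s. s - q) ` S) i = lead_coeffs S i"
proof -
  have "{s \<in> S. degree (s - q) = i} = {s \<in> S. degree s = i}"
    using assms degree_diff_eq_iff[of q _ i] by auto
  then have "{r \<in> (\<lambda>s. s - q) ` S. degree r = i} = (\<lambda>s. s - q) ` {s \<in> S. degree s = i}"
    by blast
  then have "lead_coeffs ((\<lambda>s. s - q) ` S) i = (\<lambda>s. lead_coeff (s - q)) ` {s \<in> S. degree s = i}"
    unfolding lead_coeffs_def by (simp only: image_image)
  also have "\<dots> = lead_coeffs S i"
    unfolding lead_coeffs_def
  proof (intro image_cong)
    fix s assume "s \<in> {s \<in> S. degree s = i}"
    then have "degree q < degree s"
      using assms(3) by simp
    moreover from this have "degree (s - q) = degree s"
      by (intro degree_diff_eq_left) auto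
    ultimately show "lead_coeff (s - q) = lead_coeff s"
      by (simp add: coeff_eq_0)
  qed simp
  finally show ?thesis .
qed

lemma lead_coeffs_diff_at:
  fixes S :: "'a::ab_group_add poly set"
  assumes "\<forall>s\<in>S. degree q \<le> degree s" and "0 < degree q"
  shows "lead_coeffs ((\<lambda>s. s - q) ` S) (degree q) =
    (\<lambda>c. c - lead_coeff q) ` (lead_coeffs S (degree q) - {lead_coeff q})"
proof -
  let ?A = "{s \<in> S. degree s = degree q \<and> lead_coeff s \<noteq> lead_coeff q}"
  have "{s \<in> S. degree (s - q) = degree q} = ?A"
    using assms degree_diff_eq_iff[of q _ "degree q"] by auto
  then have "{r \<in> (\<lambda>s. s - q) ` S. degree r = degree q} = (\<lambda>s. s - q) ` ?A"
    by blast
  then have "lead_coeffs ((\<lambda>s. s - q) ` S) (degree q) = (\<lambda>s. lead_coeff (s - q)) ` ?A"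
    unfolding lead_coeffs_def by (simp only: image_image)
  also have "\<dots> = (\<lambda>s. lead_coeff s - lead_coeff q) ` ?A"
  proof (intro image_cong)
    fix s assume "s \<in> ?A"
    then have "degree (s - q) = degree s"
      by (intro degree_diff_eq_left) auto
    then show "lead_coeff (s - q) = lead_coeff s - lead_coeff q"
      using \<open>s \<in> ?A\<close> by simp
  qed simp
  also have "\<dots> = (\<lambda>c. c - lead_coeff q) ` lead_coeff ` ?A"
    by (simp only: image_image)
  also have "lead_coeff ` ?A = lead_coeffs S (degree q) - {lead_coeff q}"
    by (auto simp: lead_coeffs_def)
  finally show ?thesis .
qed

lemma vdc_eq_diff_image:
  "vdc p h P = {r \<in> (\<lambda>s. s - p) ` (P \<union> (\<lambda>q. shift_poly q h) ` P). degree r \<noteq> 0}"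
  by (auto simp: vdc_def)

lemma finite_vdc: "finite P \<Longrightarrow> finite (vdc p h P)"
  by (simp add: vdc_eq_diff_image)

lemma lead_coeffs_vdc:
  assumes "0 < i"
  shows "lead_coeffs (vdc p h P) i = lead_coeffs ((\<lambda>s. s - p) ` (P \<union> (\<lambda>q. shift_poly q h) ` P)) i"
  using assms by (auto simp: lead_coeffs_def vdc_eq_diff_image)

lemma lead_coeffs_union_shift: "lead_coeffs (P \<union> (\<lambda>q. shift_poly q h) ` P) i = lead_coeffs P i"
  by (force simp: lead_coeffs_def)

lemma lead_coeffs_vdc_above_min_degree:
  assumes "\<forall>q\<in>P. degree p \<le> degree q" and "0 < degree p" and "degree p < i"
  shows "lead_coeffs (vdc p h P) i = lead_coeffs P i"
proof -
  have "\<forall>s\<in>P \<union> (\<lambda>q. shift_poly q h) ` P. degree p \<le> degree s"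
    using assms(1) by auto
  from lead_coeffs_diff_above[OF this assms(2,3)] show ?thesis
    using assms(2,3) by (simp add: lead_coeffs_vdc lead_coeffs_union_shift)
qed

lemma card_lead_coeffs_vdc_min_degree_less:
  assumes "finite P" and "p \<in> P" and "\<forall>q\<in>P. degree p \<le> degree q" and "0 < degree p"
  shows "card (lead_coeffs (vdc p h P) (degree p)) < card (lead_coeffs P (degree p))"
proof -
  have "\<forall>s\<in>P \<union> (\<lambda>q. shift_poly q h) ` P. degree p \<le> degree s"
    using assms(3) by auto
  then have "lead_coeffs (vdc p h P) (degree p) =
      (\<lambda>c. c - lead_coeff p) ` (lead_coeffs P (degree p) - {lead_coeff p})"
    using lead_coeffs_diff_at[OF _ assms(4)] assms(4)
    by (simp add: lead_coeffs_vdc lead_coeffs_union_shift)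
  then have "card (lead_coeffs (vdc p h P) (degree p)) = card (lead_coeffs P (degree p) - {lead_coeff p})"
    by (simp add: card_image)
  also have "\<dots> < card (lead_coeffs P (degree p))"
    using assms by (intro card_Diff1_less) (auto simp: lead_coeffs_def)
  finally show ?thesis .
qed

lemma degree_vdc_le:
  assumes "\<forall>q\<in>P. degree q \<le> d" and "degree p \<le> d" and "r \<in> vdc p h P"
  shows "degree r \<le> d"
  using assms by (auto simp: vdc_eq_diff_image intro!: degree_diff_le)

lemma degree_vdc_less_of_equal_lead_terms:
  assumes "\<forall>q\<in>P. degree q = degree p \<and> lead_coeff q = lead_coeff p" and "0 < degree p"
    and "r \<in> vdc p h P"
  shows "degree r < degree p"
proof -
  obtain q s where "q \<in> P" and r: "r = s - p" and "s = q \<or> s = shift_poly q h"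
    using assms(3) by (auto simp: vdc_eq_diff_image)
  then have "degree s = degree p" and "lead_coeff s = lead_coeff p"
    using assms(1) by auto
  then show ?thesis
    unfolding r using assms(2) degree_diff_less_of_lead_coeff_eq[of s p] by simp
qed

lemma max_deg_eqI:
  assumes "finite F" and "x \<in> F" and "\<forall>r\<in>F. degree r \<le> degree x"
  shows "max_deg F = degree x"
  unfolding max_deg_def using assms by (intro Max_eqI) auto

lemma lexord_map_rev_upt:
  fixes f g :: "nat \<Rightarrow> 'a::ord"
  assumes "k \<le> m" and "m < n" and "\<forall>i. m < i \<and> i < n \<longrightarrow> f i = g i" and "f m < g m"
  shows "(map f (rev [k..<n]), map g (rev [k..<n])) \<in> lexord {(x, y). x < y}"
proof -
  have "[k..<n] = [k..<m] @ [m..<n]"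
    using assms(1,2) upt_add_eq_append[of k m "n - m"] by simp
  then have split: "rev [k..<n] = rev [Suc m..<n] @ m # rev [k..<m]"
    using assms(2) by (simp add: upt_conv_Cons)
  have top: "map f (rev [Suc m..<n]) = map g (rev [Suc m..<n])"
    using assms(3) by (intro map_cong) auto
  show ?thesis
    unfolding split map_append list.map(2) top
    by (rule lexord_append_left_rightI) (simp add: assms(4))
qed

lemma type_less_of_lead_coeffs:
  assumes "max_deg F = d" and "max_deg G = d" and "1 \<le> m" and "m \<le> d"
    and "\<forall>i. m < i \<and> i \<le> d \<longrightarrow> card (lead_coeffs F i) = card (lead_coeffs G i)"
    and "card (lead_coeffs F m) < card (lead_coeffs G m)"
  shows "type_less (family_type F) (family_type G)"
  using assms lexord_map_rev_upt[of 1 m "d + 1" "\<lambda>i. card (lead_coeffs F i)" "\<lambda>i. card (lead_coeffs G i)"]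
  by (simp add: type_less_def family_type_lead_coeffs)

lemma vdc_min_degree_reduces_type:
  fixes P :: "real poly set"
  assumes fin: "finite P" and "p \<in> P" and "p1 \<in> P"
    and min: "\<forall>q\<in>P. degree p \<le> degree q" and max: "\<forall>q\<in>P. degree q \<le> degree p1"
    and "0 < degree p" and "degree p < degree p1 \<or> lead_coeff p \<noteq> lead_coeff p1"
  shows "type_less (family_type (vdc p h P)) (family_type P) \<and>
    shift_poly p1 h - p \<in> vdc p h P \<and>
    (\<forall>r\<in>vdc p h P. degree r \<le> degree (shift_poly p1 h - p))"
proof -
  have "degree p \<le> degree p1"
    using max \<open>p \<in> P\<close> by blast
  then have lead: "degree (shift_poly p1 h - p) = degree p1"
    using degree_diff_eq_left[of p "shift_poly p1 h"] assms(7) by auto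
  then have mem: "shift_poly p1 h - p \<in> vdc p h P"
    using \<open>p1 \<in> P\<close> \<open>0 < degree p\<close> \<open>degree p \<le> degree p1\<close> by (auto simp: vdc_def)
  have bound: "\<forall>r\<in>vdc p h P. degree r \<le> degree (shift_poly p1 h - p)"
    using degree_vdc_le[OF max \<open>degree p \<le> degree p1\<close>] lead by auto
  have "type_less (family_type (vdc p h P)) (family_type P)"
  proof (rule type_less_of_lead_coeffs)
    show "max_deg (vdc p h P) = degree p1"
      using max_deg_eqI[OF finite_vdc[OF fin] mem bound] lead by simp
    show "max_deg P = degree p1"
      using max_deg_eqI[OF fin \<open>p1 \<in> P\<close> max] .
    show "\<forall>i. degree p < i \<and> i \<le> degree p1 \<longrightarrow>
        card (lead_coeffs (vdc p h P) i) = card (lead_coeffs P i)"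
      using lead_coeffs_vdc_above_min_degree[OF min \<open>0 < degree p\<close>] by simp
    show "card (lead_coeffs (vdc p h P) (degree p)) < card (lead_coeffs P (degree p))"
      using card_lead_coeffs_vdc_min_degree_less[OF fin \<open>p \<in> P\<close> min \<open>0 < degree p\<close>] .
  qed (use \<open>0 < degree p\<close> \<open>degree p \<le> degree p1\<close> in auto)
  with mem bound show ?thesis
    by blast
qed

lemma vdc_self_reduces_type_of_equal_lead_terms:
  fixes P :: "real poly set"
  assumes fin: "finite P" and "p \<in> P"
    and same: "\<forall>q\<in>P. degree q = degree p \<and> lead_coeff q = lead_coeff p"
    and "2 \<le> degree p" and "h \<noteq> 0"
  shows "type_less (family_type (vdc p h P)) (family_type P) \<and>
    shift_poly p h - p \<in> vdc p h P \<and>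
    (\<forall>r\<in>vdc p h P. degree r \<le> degree (shift_poly p h - p))"
proof -
  have lead: "degree (shift_poly p h - p) = degree p - 1"
    using \<open>h \<noteq> 0\<close> by (rule degree_shift_poly_diff_self)
  then have mem: "shift_poly p h - p \<in> vdc p h P"
    using \<open>p \<in> P\<close> \<open>2 \<le> degree p\<close> by (auto simp: vdc_def)
  have bound: "\<forall>r\<in>vdc p h P. degree r \<le> degree (shift_poly p h - p)"
    using degree_vdc_less_of_equal_lead_terms[OF same] \<open>2 \<le> degree p\<close> lead by fastforce
  have "max_deg (vdc p h P) < max_deg P"
    using max_deg_eqI[OF finite_vdc[OF fin] mem bound] max_deg_eqI[OF fin \<open>p \<in> P\<close>] same lead
      \<open>2 \<le> degree p\<close> by simp
  then have "type_less (family_type (vdc p h P)) (family_type P)"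
    by (simp add: type_less_def family_type_def)
  with mem bound show ?thesis
    by blast
qed

lemma family_type_of_equal_linear_lead_terms:
  assumes "finite P" and "p \<in> P" and "\<forall>q\<in>P. degree q = 1 \<and> lead_coeff q = lead_coeff p"
  shows "family_type P = (1, [1])"
proof -
  have "max_deg P = 1"
    using max_deg_eqI[OF assms(1,2)] assms(2,3) by simp
  moreover have "lead_coeffs P 1 = {lead_coeff p}"
    unfolding lead_coeffs_def using assms(2,3) by blast
  ultimately show ?thesis
    by (simp add: family_type_lead_coeffs)
qed

theorem proposition4p7:
  fixes ps :: "real poly list"
  assumes "ps \<noteq> []"
    and "ordered_family ps"
    and "\<forall>q \<in> set ps. degree q \<ge> 1"
    and "family_type (set ps) \<noteq> (1, [1])"
  shows "\<exists>p \<in> set ps. \<exists>h0 :: int. \<forall>h :: int. h \<noteq> h0 \<longrightarrow>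
           type_less (family_type (vdc p h (set ps))) (family_type (set ps)) \<and>
           shift_poly (hd ps) h - p \<in> vdc p h (set ps) \<and>
           (\<forall>r \<in> vdc p h (set ps). degree r \<le> degree (shift_poly (hd ps) h - p))"
proof -
  obtain p1 rest where ps: "ps = p1 # rest"
    using assms(1) by (cases ps) auto
  define P where "P = set ps"
  have fin: "finite P" and "p1 \<in> P" and "hd ps = p1"
    by (simp_all add: P_def ps)
  have max: "\<forall>q\<in>P. degree q \<le> degree p1"
    using assms(2) by (auto simp: P_def ps ordered_family_def)
  have pos: "\<forall>q\<in>P. 0 < degree q"
    using assms(3) by (auto simp: P_def)
  show ?thesis
  proof (cases "\<exists>p\<in>P. (\<forall>q\<in>P. degree p \<le> degree q) \<and>
      (degree p < degree p1 \<or> lead_coeff p \<noteq> lead_coeff p1)")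
    case True
    then obtain p where "p \<in> P" and "\<forall>q\<in>P. degree p \<le> degree q"
      and "degree p < degree p1 \<or> lead_coeff p \<noteq> lead_coeff p1"
      by blast
    with vdc_min_degree_reduces_type[OF fin _ \<open>p1 \<in> P\<close> _ max] pos show ?thesis
      unfolding P_def \<open>hd ps = p1\<close> by blast
  next
    case False
    obtain p0 where "p0 \<in> P" and min: "\<forall>q\<in>P. degree p0 \<le> degree q"
      using ex_has_least_nat[of "\<lambda>q. q \<in> P" p1 degree] \<open>p1 \<in> P\<close> by blast
    with False max have "degree p0 = degree p1"
      by (meson le_less)
    with min max have "\<forall>q\<in>P. degree q = degree p1"
      by (metis antisym)
    with False have same: "\<forall>q\<in>P. degree q = degree p1 \<and> lead_coeff q = lead_coeff p1"
      by auto
    have "2 \<le> degree p1"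
      using family_type_of_equal_linear_lead_terms[OF fin \<open>p1 \<in> P\<close>] same pos \<open>p1 \<in> P\<close> assms(4)
      by (fastforce simp: P_def)
    with vdc_self_reduces_type_of_equal_lead_terms[OF fin \<open>p1 \<in> P\<close> same] show ?thesis
      unfolding P_def \<open>hd ps = p1\<close> using \<open>p1 \<in> P\<close> P_def by blast
  qed
qed

end
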